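(* Let $f:\mathbb{R}^n \to \mathbb{R}$ be strongly convex and piecewise linear-quadratic, with a fixed representation by polyhedral sets $F_1,\dots,F_p$ as described in the context, and let $C \subset \mathbb{R}^n$ be a nonempty closed convex set such that for every $x \in \mathbb{R}^n$ with $F_x \cap C \neq \emptyset$ the collection $\{F_x,C\}$ is boundedly linearly regular. Then for every $R>0$ there exists $L>0$ such that for all $x \in B_R$ and all $x^* \in \partial f(x)$, \[ \operatorname{dist}_f^{x^*}(x,C)^2 \le L \cdot \operatorname{dist}(x, C)^2 . \]
   Context: $f$ is strongly convex if there is $\alpha>0$ with $f(y)\ge f(x)+\langle x^*,y-x\rangle+\frac{\alpha}{2}\|y-x\|_2^2$ for all $x,y\in\mathbb{R}^n$, $x^*\in\partial f(x)$. A convex $f:\mathbb{R}^n\to\mathbb{R}$ is piecewise linear-quadratic if there are finitely many polyhedral sets $F_i\subset\mathbb{R}^n$, $i\in I=\{1,\dots,p\}$, whose union is $\mathbb{R}^n$, such that on each $F_i$, $f(x)=\frac12\langle x,A_ix\rangle+\langle a_i,x\rangle+\alpha_i$ with symmetric positive semidefinite $A_i$, $a_i\in\mathbb{R}^n$, $\alpha_i\in\mathbb{R}$. For $x\in\mathbb{R}^n$ set $I_f(x)=\{i: x\in F_i\}$ and $F_x=\bigcap_{i\in I_f(x)}F_i$. $B_R=\{x:\|x\|_2\le R\}$. A collection of closed convex sets $C_1,\dots,C_r$ with nonempty intersection $D=\bigcap_i C_i$ is boundedly linearly regular if for every $R>0$ there is $\gamma>0$ with $\operatorname{dist}(x,D)^2\le\gamma\sum_{i=1}^r\operatorname{dist}(x,C_i)^2$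 for all $x\in B_R$ ($\operatorname{dist}$ = Euclidean distance). For $x^*\in\partial f(x)$, $D_f^{x^*}(x,y)=f(y)-f(x)-\langle x^*,y-x\rangle$ and $\operatorname{dist}_f^{x^*}(x,C)^2:=\min_{y\in C}D_f^{x^*}(x,y)$. *)

theory Defs
  imports "HOL-Analysis.Analysis"
begin

definition subdiff :: "('a::real_inner \<Rightarrow> real) \<Rightarrow> 'a \<Rightarrow> 'a set" where
  "subdiff f x = {s. \<forall>y. f y \<ge> f x + inner s (y - x)}"

definition strongly_convex :: "('a::real_inner \<Rightarrow> real) \<Rightarrow> bool" where
  "strongly_convex f \<longleftrightarrow> (\<exists>\<alpha>>0. \<forall>x y. \<forall>s\<in>subdiff f x.
      f y \<ge> f x + inner s (y - x) + \<alpha> / 2 * (norm (y - x))\<^sup>2)"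

definition plq_repr ::
  "(real^'n \<Rightarrow> real) \<Rightarrow> nat \<Rightarrow> (nat \<Rightarrow> (real^'n) set) \<Rightarrow> (nat \<Rightarrow> real^'n^'n)
     \<Rightarrow> (nat \<Rightarrow> real^'n) \<Rightarrow> (nat \<Rightarrow> real) \<Rightarrow> bool" where
  "plq_repr f p F A a \<alpha> \<longleftrightarrow>
     (\<forall>i\<in>{1..p}. polyhedron (F i)) \<and>
     (\<Union>i\<in>{1..p}. F i) = UNIV \<and>
     (\<forall>i\<in>{1..p}. transpose (A i) = A i \<and> (\<forall>x. inner x (A i *v x) \<ge> 0)) \<and>
     (\<forall>i\<in>{1..p}. \<forall>x\<in>F i. f x = 1/2 * inner x (A i *v x) + inner (a i) x + \<alpha> i)"

definition active_idx :: "nat \<Rightarrow> (nat \<Rightarrow> 'a set) \<Rightarrow> 'a \<Rightarrow> nat set" where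
  "active_idx p F x = {i\<in>{1..p}. x \<in> F i}"

definition F_at :: "nat \<Rightarrow> (nat \<Rightarrow> 'a set) \<Rightarrow> 'a \<Rightarrow> 'a set" where
  "F_at p F x = (\<Inter>i\<in>active_idx p F x. F i)"

definition boundedly_linearly_regular :: "('a::euclidean_space) set list \<Rightarrow> bool" where
  "boundedly_linearly_regular Cs \<longleftrightarrow>
     (\<forall>C\<in>set Cs. closed C \<and> convex C) \<and> (\<Inter>(set Cs)) \<noteq> {} \<and>
     (\<forall>R>0. \<exists>\<gamma>>0. \<forall>x\<in>cball 0 R.
        (infdist x (\<Inter>(set Cs)))\<^sup>2 \<le> \<gamma> * (\<Sum>C\<leftarrow>Cs. (infdist x C)\<^sup>2))"

definition bregman :: "('a::real_inner \<Rightarrow> real) \<Rightarrow> 'a \<Rightarrow> 'a \<Rightarrow> 'a \<Rightarrow> real" where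
  "bregman f s x y = f y - f x - inner s (y - x)"

definition bregman_dist2 :: "('a::real_inner \<Rightarrow> real) \<Rightarrow> 'a \<Rightarrow> 'a \<Rightarrow> 'a set \<Rightarrow> real" where
  "bregman_dist2 f s x C = (INF y\<in>C. bregman f s x y)"

end

theory Submission
  imports Defs
begin

text \<open>
  Fix a ball and group its points x by the set F_x = F_at p F x; there are only finitely many
  such sets, so it suffices to find a constant for each one.  If F_x meets C, let y be the point
  of F_x \<inter> C nearest to x.  Near x the space is covered by the active pieces, so the
  segment [x, y] extends a little beyond x inside one quadratic piece.  Along this line the
  Bregman distance D(x, \<cdot>) is a quadratic polynomial in the parameter, nonnegative and
  vanishing at x, so its linear coefficient vanishes and D(x, y) is the quadratic form of the
  piece, at most B |x - y|^2 with B independent of the piece.  Bounded linear regularity of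
  {F_x, C} bounds |x - y| by a multiple of dist(x, C).  If F_x misses C, then dist(x, C) is
  bounded away from 0 on the compact set F_x \<inter> B_R, while the Bregman distance to a fixed
  point of C stays bounded there.
\<close>

lemma subdiffD:
  assumes "s \<in> subdiff f x"
  shows "f x + inner s (y - x) \<le> f y"
  using assms unfolding subdiff_def by blast

lemma bregman_nonneg:
  assumes "s \<in> subdiff f x"
  shows "0 \<le> bregman f s x y"
  using subdiffD[OF assms, of y] by (simp add: bregman_def)

lemma bregman_dist2_le_bregman:
  assumes "s \<in> subdiff f x" and "y \<in> C"
  shows "bregman_dist2 f s x C \<le> bregman f s x y"
  unfolding bregman_dist2_def
  using assms bregman_nonneg by (intro cINF_lower bdd_belowI[where m = 0]) auto

lemma bregman_le_reflection:
  assumes "s \<in> subdiff f x"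
  shows "bregman f s x y \<le> f y + f (2 *\<^sub>R x - y) - 2 * f x"
proof -
  have "inner s ((2 *\<^sub>R x - y) - x) = - inner s (y - x)"
    by (simp add: scaleR_2 inner_diff_right inner_add_right)
  then show ?thesis
    using subdiffD[OF assms, of "2 *\<^sub>R x - y"] by (simp add: bregman_def)
qed

lemma local_min_quadratic_linear_coeff_eq_0:
  fixes b c t0 :: real
  assumes "t0 > 0" and "\<And>t. \<bar>t\<bar> < t0 \<Longrightarrow> 0 \<le> t * b + t\<^sup>2 * c"
  shows "b = 0"
proof (rule DERIV_local_min)
  show "((\<lambda>t. t * b + t\<^sup>2 * c) has_real_derivative b) (at 0)"
    by (auto intro!: derivative_eq_intros)
  show "\<forall>t. \<bar>0 - t\<bar> < t0 \<longrightarrow> 0 * b + 0\<^sup>2 * c \<le> t * b + t\<^sup>2 * c"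
    using assms(2) by simp
qed (use assms in auto)

lemma inner_symmetric_matrix:
  fixes A :: "real^'n^'n"
  assumes "transpose A = A"
  shows "inner u (A *v v) = inner v (A *v u)"
  by (metis assms dot_lmul_matrix inner_commute vector_transpose_matrix)

lemma quadratic_along_line:
  fixes A :: "real^'n^'n"
  assumes "transpose A = A"
  shows "1/2 * inner (x + t *\<^sub>R d) (A *v (x + t *\<^sub>R d)) + inner a (x + t *\<^sub>R d)
       = 1/2 * inner x (A *v x) + inner a x + t * (inner x (A *v d) + inner a d)
         + t\<^sup>2 * (1/2 * inner d (A *v d))"
  using inner_symmetric_matrix[OF assms, of d x]
  by (simp add: algebra_simps inner_add_left inner_add_right power2_eq_square matrix_vector_mult_scaleR)

lemma convex_mem_line:
  fixes x d :: "'a::real_vector"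
  assumes "convex S" "x - t *\<^sub>R d \<in> S" "x + d \<in> S" "t > 0" "-t \<le> u" "u \<le> 1"
  shows "x + u *\<^sub>R d \<in> S"
proof -
  define w where "w = (u + t) / (1 + t)"
  have w: "0 \<le> w" "w \<le> 1" "w * (1 + t) - t = u"
    using assms(4-6) by (auto simp: w_def field_simps)
  have "x + u *\<^sub>R d = (1 - w) *\<^sub>R (x - t *\<^sub>R d) + w *\<^sub>R (x + d)"
    by (simp add: algebra_simps flip: w(3))
  with w show ?thesis
    using convexD_alt[OF assms(1-3)] by simp
qed

lemma bregman_eq_quadratic_form:
  fixes A :: "real^'n^'n"
  assumes "convex S" and "transpose A = A"
    and quad: "\<And>z. z \<in> S \<Longrightarrow> f z = 1/2 * inner z (A *v z) + inner a z + c"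
    and s: "s \<in> subdiff f x" and "x \<in> S" "y \<in> S" and "t > 0" and "x - t *\<^sub>R (y - x) \<in> S"
  shows "bregman f s x y = 1/2 * inner (y - x) (A *v (y - x))"
proof -
  define d where "d = y - x"
  define b where "b = inner x (A *v d) + inner a d"
  define q where "q = 1/2 * inner d (A *v d)"
  have f_line: "f (x + u *\<^sub>R d) = f x + u * b + u\<^sup>2 * q" if "-t \<le> u" "u \<le> 1" for u
  proof -
    have "x + u *\<^sub>R d \<in> S"
      using convex_mem_line[of S x t d u] assms that by (simp add: d_def)
    then show ?thesis
      using quad \<open>x \<in> S\<close> quadratic_along_line[OF \<open>transpose A = A\<close>, of x u d a]
      by (simp add: b_def q_def)
  qed
  have local_min: "0 \<le> u * (b - inner s d) + u\<^sup>2 * q" if "\<bar>u\<bar> < min t 1" for u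
  proof -
    have "-t \<le> u" "u \<le> 1"
      using that by linarith+
    then show ?thesis
      using f_line[of u] subdiffD[OF s, of "x + u *\<^sub>R d"] by (simp add: algebra_simps)
  qed
  have "b - inner s d = 0"
    using \<open>t > 0\<close> by (intro local_min_quadratic_linear_coeff_eq_0[of "min t 1" _ q] local_min) auto
  moreover have "f y = f x + b + q"
    using f_line[of 1] \<open>t > 0\<close> by (simp add: d_def)
  ultimately show ?thesis
    by (simp add: bregman_def q_def d_def)
qed

lemma inner_matrix_vector_le_onorm:
  fixes A :: "real^'n^'m"
  shows "inner (A *v d) e \<le> onorm ((*v) A) * norm d * norm e"
proof -
  have "inner (A *v d) e \<le> norm (A *v d) * norm e"
    by (rule norm_cauchy_schwarz)
  also have "\<dots> \<le> onorm ((*v) A) * norm d * norm e"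
    using onorm[OF matrix_vector_mul_bounded_linear, of A d] by (simp add: mult_right_mono)
  finally show ?thesis .
qed

lemma plq_closed:
  assumes "plq_repr f p F A a \<alpha>" and "i \<in> {1..p}"
  shows "closed (F i)"
  using assms by (auto simp: plq_repr_def intro: polyhedron_imp_closed)

lemma mem_F_at: "x \<in> F_at p F x"
  by (simp add: F_at_def active_idx_def)

lemma closed_F_at:
  assumes "plq_repr f p F A a \<alpha>"
  shows "closed (F_at p F x)"
  unfolding F_at_def using plq_closed[OF assms] by (auto simp: active_idx_def)

lemma finite_range_F_at: "finite (range (F_at p F))"
proof -
  have "range (active_idx p F) \<subseteq> Pow {1..p}"
    by (auto simp: active_idx_def)
  then have "finite (range (active_idx p F))"
    by (rule finite_subset) simp
  moreover have "range (F_at p F) = (\<lambda>J. \<Inter>i\<in>J. F i) ` range (active_idx p F)"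
    by (simp add: F_at_def image_image)
  ultimately show ?thesis
    by simp
qed

lemma eventually_nhds_in_active_piece:
  assumes "plq_repr f p F A a \<alpha>"
  shows "eventually (\<lambda>z. \<exists>k\<in>active_idx p F x. z \<in> F k) (nhds x)"
proof -
  define U where "U = - (\<Union>i\<in>{1..p} - active_idx p F x. F i)"
  have "open U"
    unfolding U_def using plq_closed[OF assms] by (intro open_Compl closed_UN) auto
  moreover have "x \<in> U"
    by (auto simp: U_def active_idx_def)
  moreover have "\<exists>k\<in>active_idx p F x. z \<in> F k" if "z \<in> U" for z
  proof -
    obtain k where "k \<in> {1..p}" "z \<in> F k"
      using assms unfolding plq_repr_def by blast
    with \<open>z \<in> U\<close> show ?thesis
      unfolding U_def by blast
  qed
  ultimately show ?thesis
    unfolding eventually_nhds by blast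
qed

lemma plq_bregman_le_sq_dist:
  assumes plq: "plq_repr f p F A a \<alpha>"
  obtains B where "0 \<le> B"
    and "\<And>x y s. y \<in> F_at p F x \<Longrightarrow> s \<in> subdiff f x \<Longrightarrow> bregman f s x y \<le> B * (dist x y)\<^sup>2"
proof
  define B where "B = (\<Sum>i\<in>{1..p}. onorm ((*v) (A i))) / 2"
  have onorm_nonneg: "0 \<le> onorm ((*v) (A i))" for i
    by (rule onorm_pos_le[OF matrix_vector_mul_bounded_linear])
  then show "0 \<le> B"
    by (simp add: B_def sum_nonneg)
  fix x y s
  assume y: "y \<in> F_at p F x" and s: "s \<in> subdiff f x"
  have "((\<lambda>t. x - t *\<^sub>R (y - x)) \<longlongrightarrow> x) (at_right 0)"
    by (auto intro!: tendsto_eq_intros)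
  then have "\<forall>\<^sub>F t in at_right 0. 0 < t \<and> (\<exists>k\<in>active_idx p F x. x - t *\<^sub>R (y - x) \<in> F k)"
    by (rule eventually_conj[OF eventually_at_right_less
        eventually_compose_filterlim[OF eventually_nhds_in_active_piece[OF plq]]])
  then obtain t k where "0 < t" and k: "k \<in> active_idx p F x" "x - t *\<^sub>R (y - x) \<in> F k"
    using eventually_happens'[OF trivial_limit_at_right_real] by blast
  have "k \<in> {1..p}" "x \<in> F k" "y \<in> F k"
    using k(1) y by (auto simp: active_idx_def F_at_def)
  with plq have "bregman f s x y = 1/2 * inner (y - x) (A k *v (y - x))"
    by (intro bregman_eq_quadratic_form[OF _ _ _ s _ _ \<open>0 < t\<close> k(2)])
      (auto simp: plq_repr_def polyhedron_imp_convex)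
  also have "\<dots> \<le> onorm ((*v) (A k)) / 2 * (dist x y)\<^sup>2"
    using inner_matrix_vector_le_onorm[of "A k" "y - x" "y - x"]
    by (simp add: inner_commute dist_norm norm_minus_commute power2_eq_square)
  also have "\<dots> \<le> B * (dist x y)\<^sup>2"
    using member_le_sum[of k "{1..p}" "\<lambda>i. onorm ((*v) (A i))"] onorm_nonneg \<open>k \<in> {1..p}\<close>
    by (intro mult_right_mono) (auto simp: B_def)
  finally show "bregman f s x y \<le> B * (dist x y)\<^sup>2" .
qed

lemma bregman_dist2_bound_regular:
  assumes plq: "plq_repr f p F A a \<alpha>" and regular: "boundedly_linearly_regular [G, C]"
    and "R > 0"
  shows "\<exists>L>0. \<forall>x\<in>cball 0 R. F_at p F x = G \<longrightarrow>
           (\<forall>s\<in>subdiff f x. bregman_dist2 f s x C \<le> L * (infdist x C)\<^sup>2)"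
proof -
  obtain B where "0 \<le> B"
    and B: "\<And>x y s. y \<in> F_at p F x \<Longrightarrow> s \<in> subdiff f x \<Longrightarrow> bregman f s x y \<le> B * (dist x y)\<^sup>2"
    using plq_bregman_le_sq_dist[OF plq] by blast
  have "closed (G \<inter> C)" "G \<inter> C \<noteq> {}"
    using regular by (auto simp: boundedly_linearly_regular_def)
  have "\<exists>\<gamma>>0. \<forall>x\<in>cball 0 R. (infdist x (G \<inter> C))\<^sup>2 \<le> \<gamma> * ((infdist x G)\<^sup>2 + (infdist x C)\<^sup>2)"
    using regular \<open>R > 0\<close> unfolding boundedly_linearly_regular_def by simp
  then obtain \<gamma> where "\<gamma> > 0"
    and \<gamma>: "\<And>x. x \<in> cball 0 R \<Longrightarrow> (infdist x (G \<inter> C))\<^sup>2 \<le> \<gamma> * ((infdist x G)\<^sup>2 + (infdist x C)\<^sup>2)"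
    by blast
  show ?thesis
  proof (intro exI[of _ "B * \<gamma> + 1"] conjI ballI impI)
    show "0 < B * \<gamma> + 1"
      using \<open>0 \<le> B\<close> \<open>\<gamma> > 0\<close> by (simp add: add_nonneg_pos)
    fix x s
    assume x: "x \<in> cball 0 R" and G: "F_at p F x = G" and s: "s \<in> subdiff f x"
    obtain y where y: "y \<in> G \<inter> C" "infdist x (G \<inter> C) = dist x y"
      using infdist_attains_inf[OF \<open>closed (G \<inter> C)\<close> \<open>G \<inter> C \<noteq> {}\<close>] by blast
    have "bregman_dist2 f s x C \<le> bregman f s x y"
      using bregman_dist2_le_bregman[OF s] y(1) by blast
    also have "\<dots> \<le> B * (dist x y)\<^sup>2"
      using B[OF _ s] y(1) G by blast
    also have "\<dots> \<le> B * (\<gamma> * (infdist x C)\<^sup>2)"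
      using \<gamma>[OF x] mem_F_at[of x p F] G y(2) \<open>0 \<le> B\<close> by (simp add: mult_left_mono)
    also have "\<dots> \<le> (B * \<gamma> + 1) * (infdist x C)\<^sup>2"
      by (simp add: algebra_simps)
    finally show "bregman_dist2 f s x C \<le> (B * \<gamma> + 1) * (infdist x C)\<^sup>2" .
  qed
qed

lemma bregman_dist2_bound_disjoint:
  fixes f :: "'a::euclidean_space \<Rightarrow> real"
  assumes "convex_on UNIV f" and "compact K" and "closed C" "C \<noteq> {}" and "K \<inter> C = {}"
  shows "\<exists>L>0. \<forall>x\<in>K. \<forall>s\<in>subdiff f x. bregman_dist2 f s x C \<le> L * (infdist x C)\<^sup>2"
proof -
  obtain \<delta> where "\<delta> > 0" and \<delta>: "\<And>x y. x \<in> K \<Longrightarrow> y \<in> C \<Longrightarrow> \<delta> \<le> dist x y"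
    using separate_compact_closed[OF assms(2,3,5)] by blast
  have \<delta>_le_infdist: "\<delta> \<le> infdist x C" if "x \<in> K" for x
    using infdist_attains_inf[OF assms(3,4), of x] \<delta>[OF that] by metis
  obtain c where "c \<in> C"
    using assms(4) by blast
  obtain r where r: "\<And>x. x \<in> K \<Longrightarrow> norm x \<le> r" and "r > 0"
    using compact_imp_bounded[OF assms(2)] by (auto simp: bounded_pos)
  define r' where "r' = 2 * r + norm c"
  have "continuous_on UNIV f"
    using assms(1) by (intro convex_on_continuous) auto
  then have "bounded (f ` cball 0 r')"
    by (intro compact_imp_bounded compact_continuous_image) (auto intro: continuous_on_subset)
  then obtain M where M: "\<And>z. norm z \<le> r' \<Longrightarrow> \<bar>f z\<bar> \<le> M" and "M > 0"
    unfolding bounded_pos by fastforce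
  show ?thesis
  proof (intro exI[of _ "4 * M / \<delta>\<^sup>2 + 1"] conjI ballI)
    show "0 < 4 * M / \<delta>\<^sup>2 + 1"
      using \<open>M > 0\<close> by (simp add: add_nonneg_pos)
    fix x s
    assume x: "x \<in> K" and s: "s \<in> subdiff f x"
    have "norm (2 *\<^sub>R x - c) \<le> 2 * norm x + norm c"
      using norm_triangle_ineq4[of "2 *\<^sub>R x" c] by simp
    then have "norm x \<le> r'" "norm c \<le> r'" "norm (2 *\<^sub>R x - c) \<le> r'"
      using r[OF x] \<open>r > 0\<close> norm_ge_zero[of c] unfolding r'_def by linarith+
    then have "\<bar>f x\<bar> \<le> M" "\<bar>f c\<bar> \<le> M" "\<bar>f (2 *\<^sub>R x - c)\<bar> \<le> M"
      using M by blast+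
    then have "bregman f s x c \<le> 4 * M"
      using bregman_le_reflection[OF s, of c] by linarith
    also have "\<dots> = 4 * M / \<delta>\<^sup>2 * \<delta>\<^sup>2"
      using \<open>\<delta> > 0\<close> by simp
    also have "\<dots> \<le> 4 * M / \<delta>\<^sup>2 * (infdist x C)\<^sup>2"
      using \<delta>_le_infdist[OF x] \<open>\<delta> > 0\<close> \<open>M > 0\<close> by (intro mult_left_mono power_mono) auto
    also have "\<dots> \<le> (4 * M / \<delta>\<^sup>2 + 1) * (infdist x C)\<^sup>2"
      by (simp add: algebra_simps)
    finally show "bregman_dist2 f s x C \<le> (4 * M / \<delta>\<^sup>2 + 1) * (infdist x C)\<^sup>2"
      using bregman_dist2_le_bregman[OF s \<open>c \<in> C\<close>] by linarith
  qed
qed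

lemma finite_ex_uniform_bound:
  fixes P :: "'a \<Rightarrow> real \<Rightarrow> bool"
  assumes "finite S" and "\<forall>G\<in>S. \<exists>L>0. P G L" and mono: "\<And>G L L'. P G L \<Longrightarrow> L \<le> L' \<Longrightarrow> P G L'"
  shows "\<exists>L>0. \<forall>G\<in>S. P G L"
  using assms(1,2)
proof (induction S rule: finite_induct)
  case empty
  show ?case
    using zero_less_one by blast
next
  case (insert G S)
  then obtain L1 L2 where "L1 > 0" "P G L1" "L2 > 0" "\<forall>G\<in>S. P G L2"
    by auto
  then show ?case
    using mono by (intro exI[of _ "max L1 L2"]) (auto intro: max.cobounded1 max.cobounded2)
qed

lemma bregman_dist2_bound_on_F_at:
  fixes f :: "real^'n \<Rightarrow> real"
  assumes "convex_on UNIV f" and plq: "plq_repr f p F A a \<alpha>" and "C \<noteq> {}" "closed C"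
    and regular: "\<forall>x. F_at p F x \<inter> C \<noteq> {} \<longrightarrow> boundedly_linearly_regular [F_at p F x, C]"
    and "R > 0" and "G \<in> range (F_at p F)"
  shows "\<exists>L>0. \<forall>x\<in>cball 0 R. F_at p F x = G \<longrightarrow>
           (\<forall>s\<in>subdiff f x. bregman_dist2 f s x C \<le> L * (infdist x C)\<^sup>2)"
proof (cases "G \<inter> C = {}")
  case True
  have "compact (G \<inter> cball 0 R)"
    using \<open>G \<in> range (F_at p F)\<close> closed_F_at[OF plq] by (auto intro: closed_Int_compact)
  then obtain L where "L > 0" and L: "\<forall>x\<in>G \<inter> cball 0 R. \<forall>s\<in>subdiff f x.
      bregman_dist2 f s x C \<le> L * (infdist x C)\<^sup>2"
    using bregman_dist2_bound_disjoint[OF assms(1) _ assms(4,3)] True by blast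
  then show ?thesis
    using mem_F_at[of _ p F] by blast
next
  case False
  from \<open>G \<in> range (F_at p F)\<close> obtain x0 where "G = F_at p F x0"
    by blast
  with False regular have "boundedly_linearly_regular [G, C]"
    by blast
  then show ?thesis
    by (rule bregman_dist2_bound_regular[OF plq _ \<open>R > 0\<close>])
qed

theorem theorem3p5:
  fixes f :: "real^'n \<Rightarrow> real" and p :: nat
    and F :: "nat \<Rightarrow> (real^'n) set" and A :: "nat \<Rightarrow> real^'n^'n"
    and a :: "nat \<Rightarrow> real^'n" and \<alpha> :: "nat \<Rightarrow> real"
    and C :: "(real^'n) set"
  assumes "convex_on UNIV f"
    and "strongly_convex f"
    and "plq_repr f p F A a \<alpha>"
    and "C \<noteq> {}" and "closed C" and "convex C"
    and "\<forall>x. F_at p F x \<inter> C \<noteq> {} \<longrightarrow> boundedly_linearly_regular [F_at p F x, C]"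
  shows "\<forall>R>0. \<exists>L>0. \<forall>x\<in>cball 0 R. \<forall>s\<in>subdiff f x.
           bregman_dist2 f s x C \<le> L * (infdist x C)\<^sup>2"
proof (intro allI impI)
  fix R :: real
  assume "R > 0"
  let ?bound = "\<lambda>G L. \<forall>x\<in>cball 0 R. F_at p F x = G \<longrightarrow>
                  (\<forall>s\<in>subdiff f x. bregman_dist2 f s x C \<le> L * (infdist x C)\<^sup>2)"
  have "?bound G L'" if "?bound G L" and "L \<le> L'" for G L L'
    using that order_trans[OF _ mult_right_mono[OF \<open>L \<le> L'\<close> zero_le_power2]] by blast
  then obtain L where "L > 0" and L: "\<forall>G\<in>range (F_at p F). ?bound G L"
    using finite_ex_uniform_bound[where P = ?bound, OF finite_range_F_at[of p F]]
      bregman_dist2_bound_on_F_at[OF assms(1,3,4,5,7) \<open>R > 0\<close>] by blast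
  show "\<exists>L>0. \<forall>x\<in>cball 0 R. \<forall>s\<in>subdiff f x. bregman_dist2 f s x C \<le> L * (infdist x C)\<^sup>2"
    using \<open>L > 0\<close> L[rule_format, OF rangeI _ refl] by blast
qed

end
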